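(* No vector $(x_\alpha,\dots,x_1)$ with $\alpha\ge2$ and $x_{\alpha-1}=1$ is realizable.
   Context: All graphs are finite, nonempty, and reflexive (every vertex has a loop). $N[v]$ is the closed neighborhood of $v$ (including $v$). For distinct $v,w$, $w$ strictly corners $v$ if $N[v]\subsetneq N[w]$; $v$ is then a strict corner. Corner ranking: set $G^{(1)}=G$, $k=1$. If $G^{(k)}$ is a clique, give all its vertices rank $k$ and stop. Else if $G^{(k)}$ has no strict corners, give all its vertices rank $\infty$ and stop. Else give every strict corner of $G^{(k)}$ rank $k$, delete them to get $G^{(k+1)}$ (induced subgraph), increase $k$ and repeat. The corner rank is the largest rank of a vertex; $X_k$ is the set of rank-$k$ vertices; cop-win graphs are exactly those of finite corner rank. A vector is a finite list of positive integers; the rank cardinality vector of a graph of corner rank $\alpha$ is $(x_\alpha,\dots,x_1)$ with $x_k=|X_k|$; a vector is realizable if it is the rank cardinality vector of some cop-win graph. *)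

theory Defs
  imports Main
begin

text \<open>A finite, nonempty, reflexive (undirected) graph: vertex set V, adjacency E
  (only its restriction to V matters).\<close>
definition refl_graph :: "'a set \<Rightarrow> ('a \<Rightarrow> 'a \<Rightarrow> bool) \<Rightarrow> bool" where
  "refl_graph V E \<longleftrightarrow> finite V \<and> V \<noteq> {} \<and> (\<forall>u\<in>V. E u u)
     \<and> (\<forall>u\<in>V. \<forall>v\<in>V. E u v \<longleftrightarrow> E v u)"

definition cnbh :: "('a \<Rightarrow> 'a \<Rightarrow> bool) \<Rightarrow> 'a set \<Rightarrow> 'a \<Rightarrow> 'a set" where
  "cnbh E S v = {u \<in> S. E v u}"

definition strict_corners :: "('a \<Rightarrow> 'a \<Rightarrow> bool) \<Rightarrow> 'a set \<Rightarrow> 'a set" where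
  "strict_corners E S = {v \<in> S. \<exists>w\<in>S. w \<noteq> v \<and> cnbh E S v \<subset> cnbh E S w}"

definition is_clique :: "('a \<Rightarrow> 'a \<Rightarrow> bool) \<Rightarrow> 'a set \<Rightarrow> bool" where
  "is_clique E S \<longleftrightarrow> (\<forall>u\<in>S. \<forall>v\<in>S. E u v)"

text \<open>stage E V k is the vertex set of G^(k+1) in the corner ranking.\<close>
fun stage :: "('a \<Rightarrow> 'a \<Rightarrow> bool) \<Rightarrow> 'a set \<Rightarrow> nat \<Rightarrow> 'a set" where
  "stage E V 0 = V"
| "stage E V (Suc k) = stage E V k - strict_corners E (stage E V k)"

text \<open>Cop-win = finite corner rank = the ranking reaches a clique.\<close>
definition cop_win :: "'a set \<Rightarrow> ('a \<Rightarrow> 'a \<Rightarrow> bool) \<Rightarrow> bool" where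
  "cop_win V E \<longleftrightarrow> refl_graph V E \<and> (\<exists>k. is_clique E (stage E V k))"

text \<open>Corner rank alpha (for cop-win graphs): least k \<ge> 1 with G^(k) a clique.\<close>
definition corner_rank :: "'a set \<Rightarrow> ('a \<Rightarrow> 'a \<Rightarrow> bool) \<Rightarrow> nat" where
  "corner_rank V E = Suc (LEAST k. is_clique E (stage E V k))"

text \<open>X_k, the set of rank-k vertices, for 1 \<le> k \<le> alpha.\<close>
definition rank_set :: "'a set \<Rightarrow> ('a \<Rightarrow> 'a \<Rightarrow> bool) \<Rightarrow> nat \<Rightarrow> 'a set" where
  "rank_set V E k =
     (if k = corner_rank V E then stage E V (k - 1)
      else strict_corners E (stage E V (k - 1)))"

text \<open>Rank cardinality vector (x_alpha, ..., x_1) as a list.\<close>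
definition rank_card_vector :: "'a set \<Rightarrow> ('a \<Rightarrow> 'a \<Rightarrow> bool) \<Rightarrow> nat list" where
  "rank_card_vector V E =
     map (\<lambda>i. card (rank_set V E (corner_rank V E - i))) [0..<corner_rank V E]"

text \<open>Realizable: the rank cardinality vector of some cop-win graph
  (vertices drawn from nat; every finite graph is isomorphic to one such).\<close>
definition realizable :: "nat list \<Rightarrow> bool" where
  "realizable xs \<longleftrightarrow> (\<exists>(V::nat set) E. cop_win V E \<and> rank_card_vector V E = xs)"

end

theory Submission
  imports Defs
begin

text \<open>Let S be the last non-clique stage of the corner ranking, so that its strict corners
  are exactly the rank-(\<alpha>-1) vertices and removing them leaves a clique. If v were the only
  strict corner of S, some u would be non-adjacent to v. A vertex w strictly cornering v is
  adjacent to v and hence to every vertex of S, whereas N[u] = S - {v}; so w strictly corners u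
  as well, and v is not the only strict corner after all.\<close>

lemma stage_subset: "stage E V k \<subseteq> V"
  by (induction k) auto

lemma length_rank_card_vector: "length (rank_card_vector V E) = corner_rank V E"
  by (simp add: rank_card_vector_def)

lemma rank_card_vector_nth_1:
  assumes "corner_rank V E = Suc (Suc k)"
  shows "rank_card_vector V E ! 1 = card (strict_corners E (stage E V k))"
  using assms by (simp add: rank_card_vector_def rank_set_def del: upt_Suc)

lemma is_clique_stage_corner_rank:
  assumes "cop_win V E"
  shows "is_clique E (stage E V (corner_rank V E - 1))"
  using assms LeastI_ex[of "\<lambda>k. is_clique E (stage E V k)"]
  by (simp add: cop_win_def corner_rank_def)

lemma not_is_clique_stage_below_corner_rank:
  assumes "k < corner_rank V E - 1"
  shows "\<not> is_clique E (stage E V k)"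
  using assms not_less_Least[of k "\<lambda>k. is_clique E (stage E V k)"]
  by (simp add: corner_rank_def)

lemma non_neighbour_if_clique_minus:
  assumes sym: "\<forall>u\<in>S. \<forall>v\<in>S. E u v \<longleftrightarrow> E v u"
    and "\<not> is_clique E S" and "is_clique E (S - {v})"
  obtains u where "u \<in> S" "\<not> E v u"
proof -
  from assms(2) obtain a b where ab: "a \<in> S" "b \<in> S" "\<not> E a b"
    unfolding is_clique_def by auto
  with assms(3) have "a = v \<or> b = v"
    unfolding is_clique_def by blast
  with ab sym that show thesis by blast
qed

lemma card_strict_corners_ne_1:
  assumes refl: "\<forall>u\<in>S. E u u" and sym: "\<forall>u\<in>S. \<forall>v\<in>S. E u v \<longleftrightarrow> E v u"
    and not_clique: "\<not> is_clique E S" and clique: "is_clique E (S - strict_corners E S)"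
  shows "card (strict_corners E S) \<noteq> 1"
proof
  assume "card (strict_corners E S) = 1"
  then obtain v where corners: "strict_corners E S = {v}"
    by (auto simp: card_Suc_eq)
  then have "v \<in> strict_corners E S" by simp
  then obtain w where vS: "v \<in> S" and wS: "w \<in> S" and "w \<noteq> v"
    and v_cornered: "cnbh E S v \<subset> cnbh E S w"
    unfolding strict_corners_def by blast
  have clique_v: "is_clique E (S - {v})"
    using clique corners by simp
  obtain u where uS: "u \<in> S" and "\<not> E v u"
    using non_neighbour_if_clique_minus[OF sym not_clique clique_v] .
  have "E w v"
    using v_cornered vS refl unfolding cnbh_def by auto
  have "u \<noteq> v" "u \<noteq> w"
    using \<open>\<not> E v u\<close> \<open>E w v\<close> refl sym uS vS wS by auto
  have "cnbh E S w = S"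
    using clique_v wS \<open>w \<noteq> v\<close> \<open>E w v\<close> unfolding cnbh_def is_clique_def by auto
  moreover have "cnbh E S u = S - {v}"
    using clique_v uS \<open>u \<noteq> v\<close> \<open>\<not> E v u\<close> sym vS unfolding cnbh_def is_clique_def by auto
  ultimately have "cnbh E S u \<subset> cnbh E S w"
    using vS by auto
  then have "u \<in> strict_corners E S"
    using uS wS \<open>u \<noteq> w\<close> unfolding strict_corners_def by auto
  with corners \<open>u \<noteq> v\<close> show False by simp
qed

theorem corollary3p19:
  fixes xs :: "nat list"
  assumes "length xs \<ge> 2"
    and "\<forall>x\<in>set xs. x > 0"
    and "xs ! 1 = 1"
  shows "\<not> realizable xs"
proof
  assume "realizable xs"
  then obtain V :: "nat set" and E where cw: "cop_win V E" and xs: "rank_card_vector V E = xs"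
    unfolding realizable_def by auto
  obtain k where rank: "corner_rank V E = Suc (Suc k)"
    using assms(1) xs length_rank_card_vector[of V E] by (metis add_2_eq_Suc le_Suc_ex)
  let ?S = "stage E V k"
  have "card (strict_corners E ?S) = 1"
    using assms(3) xs rank_card_vector_nth_1[OF rank] by simp
  moreover have "is_clique E (?S - strict_corners E ?S)"
    using is_clique_stage_corner_rank[OF cw] rank by simp
  moreover have "\<not> is_clique E ?S"
    using not_is_clique_stage_below_corner_rank[of k V E] rank by simp
  moreover have "refl_graph V E"
    using cw unfolding cop_win_def by simp
  ultimately show False
    using card_strict_corners_ne_1[of ?S E] stage_subset[of E V k]
    unfolding refl_graph_def by blast
qed

end
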